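(* Let $H\in\mathbb{R}^{n_z\times n_z}$ be symmetric positive definite, $F\in\mathbb{R}^{n_x\times n_z}$, $G\in\mathbb{R}^{n_c\times n_z}$, $S\in\mathbb{R}^{n_c\times n_x}$, $w\in\mathbb{R}^{n_c}$, and assume $\{z: Gz\le Sx+w\}\neq\emptyset$ for every $x\in\mathbb{R}^{n_x}$. Assume LICQ: for every $x$, the rows $\{G_j: j\in\mathbb{A}(x)\}$ are linearly independent. Let $\kappa$ be a global Lipschitz constant, $x,\hat{x}\in\mathbb{R}^{n_x}$, and $$\mathbb{I}(x)=\mathbb{A}(\hat{x})\cup\big\{j\in\mathbb{A}^c(\hat{x}): \mathcal{B}(z^*(\hat{x}),\kappa\|x-\hat{x}\|)\not\subseteq\mathcal{Z}_j(x)\big\}.$$ If $\|x-\hat{x}\|\le\sigma_i/\sqrt{1+\kappa^2}$ for some $i\in\{1,\dots,n_c\}$, then $|\mathbb{I}(x)|\le n_z+i$.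
   Context: mp-QP$(x)$: minimize $V(z)=\frac12z^THz+x^TFz$ over $\mathcal{Z}(x)=\{z: Gz\le Sx+w\}$. $G_j,S_j$ are $j$-th rows, $w_j$ the $j$-th entry, $\mathcal{Z}_j(x)=\{z: G_jz\le S_jx+w_j\}$. $z^*(x,\mathbb{I})$ is the unique minimizer of $V$ subject only to constraints indexed by $\mathbb{I}\subseteq\{1,\dots,n_c\}$; $z^*(x)=z^*(x,\{1,\dots,n_c\})$. $\mathbb{A}(x)=\{j: G_jz^*(x)=S_jx+w_j\}$, $\mathbb{A}^c(x)$ its complement in $\{1,\dots,n_c\}$. A global Lipschitz constant is $\kappa\in\mathbb{R}$ with $\|z^*(x_1,\mathbb{I})-z^*(x_2,\mathbb{I})\|\le\kappa\|x_1-x_2\|$ for all $x_1,x_2,\mathbb{I}$. With $\bar H=[-S,\;G]$, rows $\bar H_j$, $\mathcal{V}=\{v\in\mathbb{R}^{n_x+n_z}:\bar Hv\le w\}$, $\mathcal{V}_j=\{v:\bar H_jv\le w_j\}$, define $\sigma_i=\sup\{r\ge0: \inf_{v\in\mathcal{V}}|\{j: \mathcal{B}(v,r)\subseteq\mathcal{V}_j\}|\ge n_c-i\}\in[0,+\infty]$. $\mathcal{B}(q,r)$ is the closed Euclidean ball. *)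

theory Defs
  imports "HOL-Analysis.Analysis"
begin

text \<open>Dimensions are the cardinalities of the finite index types 'z, 'x, 'c.
  Row j of G is G $ j, so G_j z = (G $ j) \<bullet> z.\<close>

definition qp_cost ::
  "real^'z^'z \<Rightarrow> real^'z^'x \<Rightarrow> real^'x \<Rightarrow> real^'z \<Rightarrow> real" where
  "qp_cost H F x z = (1/2) * (z \<bullet> (H *v z)) + x \<bullet> (F *v z)"

definition Zj ::
  "real^'z^'c \<Rightarrow> real^'x^'c \<Rightarrow> real^'c \<Rightarrow> 'c \<Rightarrow> real^'x \<Rightarrow> (real^'z) set" where
  "Zj G S w j x = {z. (G $ j) \<bullet> z \<le> (S $ j) \<bullet> x + w $ j}"

definition zstar ::
  "real^'z^'z \<Rightarrow> real^'z^'x \<Rightarrow> real^'z^'c \<Rightarrow> real^'x^'c \<Rightarrow> real^'c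
   \<Rightarrow> real^'x \<Rightarrow> 'c set \<Rightarrow> real^'z" where
  "zstar H F G S w x I =
     (THE z. z \<in> (\<Inter>j\<in>I. Zj G S w j x) \<and>
             (\<forall>z'\<in>(\<Inter>j\<in>I. Zj G S w j x). qp_cost H F x z \<le> qp_cost H F x z'))"

definition active_set ::
  "real^'z^'z \<Rightarrow> real^'z^'x \<Rightarrow> real^'z^'c \<Rightarrow> real^'x^'c \<Rightarrow> real^'c
   \<Rightarrow> real^'x \<Rightarrow> 'c set" where
  "active_set H F G S w x =
     {j. (G $ j) \<bullet> zstar H F G S w x UNIV = (S $ j) \<bullet> x + w $ j}"

definition global_lipschitz ::
  "real^'z^'z \<Rightarrow> real^'z^'x \<Rightarrow> real^'z^'c \<Rightarrow> real^'x^'c \<Rightarrow> real^'c \<Rightarrow> real \<Rightarrow> bool" where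
  "global_lipschitz H F G S w \<kappa> \<longleftrightarrow>
     (\<forall>x1 x2 (I::'c set). norm (zstar H F G S w x1 I - zstar H F G S w x2 I) \<le> \<kappa> * norm (x1 - x2))"

text \<open>V_j = {v = (x,z) \<in> R^{n_x+n_z}. Hbar_j v \<le> w_j} with Hbar = [-S, G];
  the product type carries the Euclidean norm sqrt(|x|^2+|z|^2).\<close>
definition Vj ::
  "real^'z^'c \<Rightarrow> real^'x^'c \<Rightarrow> real^'c \<Rightarrow> 'c \<Rightarrow> ((real^'x) \<times> (real^'z)) set" where
  "Vj G S w j = {(x, z). - ((S $ j) \<bullet> x) + (G $ j) \<bullet> z \<le> w $ j}"

definition Vset ::
  "real^'z^'c \<Rightarrow> real^'x^'c \<Rightarrow> real^'c \<Rightarrow> ((real^'x) \<times> (real^'z)) set" where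
  "Vset G S w = (\<Inter>j. Vj G S w j)"

definition sigma ::
  "real^'z^'c \<Rightarrow> real^'x^'c \<Rightarrow> real^'c \<Rightarrow> nat \<Rightarrow> ereal" where
  "sigma G S w i =
     Sup {ereal r | r. r \<ge> 0 \<and>
       (INF v\<in>Vset G S w. ereal (real (card {j::'c. cball v r \<subseteq> Vj G S w j})))
         \<ge> ereal (real CARD('c) - real i)}"

end

theory Submission
  imports Defs
begin

text \<open>By LICQ the active set at \<open>xhat\<close> has at most \<open>n_z\<close> elements. Every other index \<open>j\<close> of
  \<open>\<I>(x)\<close> comes with a point \<open>z\<close> at distance at most \<open>\<kappa> \<parallel>x - xhat\<parallel>\<close> from \<open>z*(xhat)\<close> such that
  \<open>(x, z) \<notin> V_j\<close>; hence the ball of radius \<open>sqrt (1 + \<kappa>\<^sup>2) \<parallel>x - xhat\<parallel> \<le> \<sigma>_i\<close> around the point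
  \<open>(xhat, z*(xhat))\<close> of \<open>V\<close> is not contained in \<open>V_j\<close>, which by the definition of \<open>\<sigma>_i\<close> happens
  for at most \<open>i\<close> indices. The supremum defining \<open>\<sigma>_i\<close> need not be attained; this is harmless
  because the \<open>V_j\<close> are closed, so a ball leaving \<open>V_j\<close> already leaves it at a smaller radius.\<close>

lemma pos_def_quadratic_form_ge:
  fixes H :: "real^'n^'n"
  assumes pd: "\<forall>z. z \<noteq> 0 \<longrightarrow> z \<bullet> (H *v z) > 0"
  obtains m where "m > 0" "\<And>z. m * (norm z)\<^sup>2 \<le> z \<bullet> (H *v z)"
proof -
  have "continuous_on (sphere 0 1) (\<lambda>z::real^'n. z \<bullet> (H *v z))"
    by (intro continuous_intros)
  moreover have "compact (sphere (0::real^'n) 1)" "sphere (0::real^'n) 1 \<noteq> {}"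
    by simp_all
  ultimately obtain u where u: "u \<in> sphere 0 1"
    and u_min: "\<forall>y\<in>sphere 0 1. u \<bullet> (H *v u) \<le> y \<bullet> (H *v y)"
    using continuous_attains_inf by blast
  have "(u \<bullet> (H *v u)) * (norm z)\<^sup>2 \<le> z \<bullet> (H *v z)" for z :: "real^'n"
  proof (cases "z = 0")
    case False
    have "(1 / norm z) *\<^sub>R z \<in> sphere 0 1"
      using False by simp
    then have "u \<bullet> (H *v u) \<le> ((1 / norm z) *\<^sub>R z) \<bullet> (H *v ((1 / norm z) *\<^sub>R z))"
      using u_min by blast
    also have "\<dots> = (z \<bullet> (H *v z)) / (norm z)\<^sup>2"
      by (simp add: matrix_vector_mult_scaleR power2_eq_square)
    finally show ?thesis
      using False by (simp add: field_simps)
  qed simp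
  moreover have "u \<noteq> 0"
    using u by auto
  then have "u \<bullet> (H *v u) > 0"
    using pd by blast
  ultimately show ?thesis
    using that by blast
qed

lemma le_of_square_le_linear:
  fixes m t a b :: real
  assumes "0 < m" "0 \<le> a" "0 \<le> b" and le: "m * t\<^sup>2 \<le> a * t + b"
  shows "t \<le> (a + b) / m + 1"
proof (cases "t \<le> 1")
  case False
  then have "m * t * t \<le> (a + b) * t"
    using le assms(3) mult_left_mono[of 1 t b] by (simp add: power2_eq_square algebra_simps)
  then have "m * t \<le> a + b"
    using False by simp
  then show ?thesis
    using assms(1) by (simp add: field_simps)
next
  case True
  moreover have "0 \<le> (a + b) / m"
    using assms by simp
  ultimately show ?thesis
    by linarith
qed

lemma continuous_attains_inf_bounded_sublevel:
  fixes f :: "'a::{real_normed_vector,heine_borel} \<Rightarrow> real"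
  assumes "closed K" "z0 \<in> K" "continuous_on K f"
    and bounded: "\<And>z. z \<in> K \<Longrightarrow> f z \<le> f z0 \<Longrightarrow> norm z \<le> R"
  obtains z where "z \<in> K" "\<And>y. y \<in> K \<Longrightarrow> f z \<le> f y"
proof -
  let ?L = "K \<inter> cball 0 R"
  have "z0 \<in> ?L"
    using assms(2) bounded[of z0] by simp
  moreover have "compact ?L"
    using assms(1) by (simp add: closed_Int_compact)
  moreover have "continuous_on ?L f"
    using assms(3) by (rule continuous_on_subset) simp
  ultimately obtain z where z: "z \<in> ?L" and z_min: "\<And>y. y \<in> ?L \<Longrightarrow> f z \<le> f y"
    using continuous_attains_inf[of ?L f] by blast
  have "f z \<le> f y" if "y \<in> K" for y
    using that z_min[of y] z_min[OF \<open>z0 \<in> ?L\<close>] bounded[of y] by force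
  then show ?thesis
    using that z by blast
qed

lemma qp_cost_attains_inf:
  fixes H :: "real^'z^'z" and K :: "(real^'z) set"
  assumes pd: "\<forall>z. z \<noteq> 0 \<longrightarrow> z \<bullet> (H *v z) > 0"
    and "closed K" "K \<noteq> {}"
  obtains z where "z \<in> K" "\<And>y. y \<in> K \<Longrightarrow> qp_cost H F x z \<le> qp_cost H F x y"
proof -
  obtain m where "m > 0" and m: "\<And>z. m * (norm z)\<^sup>2 \<le> z \<bullet> (H *v z)"
    using pos_def_quadratic_form_ge[OF pd] by blast
  define c where "c = x v* F"
  have cost: "qp_cost H F x z = (1/2) * (z \<bullet> (H *v z)) + c \<bullet> z" for z
    unfolding qp_cost_def c_def by (simp add: dot_lmul_matrix)
  obtain z0 where "z0 \<in> K"
    using assms(3) by blast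
  have "norm z \<le> (2 * norm c + 2 * \<bar>qp_cost H F x z0\<bar>) / m + 1"
    if "qp_cost H F x z \<le> qp_cost H F x z0" for z
  proof (rule le_of_square_le_linear)
    have "- (c \<bullet> z) \<le> norm c * norm z"
      using norm_cauchy_schwarz[of "-c" z] by simp
    then show "m * (norm z)\<^sup>2 \<le> (2 * norm c) * norm z + 2 * \<bar>qp_cost H F x z0\<bar>"
      using that m[of z] cost[of z] abs_ge_self[of "qp_cost H F x z0"] by linarith
  qed (use \<open>m > 0\<close> in auto)
  moreover have "continuous_on K (qp_cost H F x)"
    unfolding qp_cost_def by (intro continuous_intros)
  ultimately show ?thesis
    using continuous_attains_inf_bounded_sublevel[OF \<open>closed K\<close> \<open>z0 \<in> K\<close>] that by blast
qed

lemma qp_cost_midpoint: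
  "qp_cost H F x ((1/2) *\<^sub>R (a + b)) =
     (qp_cost H F x a + qp_cost H F x b) / 2 - (1/8) * ((a - b) \<bullet> (H *v (a - b)))"
  unfolding qp_cost_def
  by (simp add: matrix_vector_mult_scaleR matrix_vector_right_distrib matrix_vector_mult_diff_distrib
      inner_add_left inner_add_right inner_diff_left inner_diff_right algebra_simps)

lemma qp_cost_minimizer_unique:
  fixes H :: "real^'z^'z"
  assumes pd: "\<forall>z. z \<noteq> 0 \<longrightarrow> z \<bullet> (H *v z) > 0" and "convex K"
    and a: "a \<in> K" "\<forall>y\<in>K. qp_cost H F x a \<le> qp_cost H F x y"
    and b: "b \<in> K" "\<forall>y\<in>K. qp_cost H F x b \<le> qp_cost H F x y"
  shows "a = b"
proof (rule ccontr)
  assume "a \<noteq> b"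
  then have "(a - b) \<bullet> (H *v (a - b)) > 0"
    using pd by simp
  moreover have "(1/2) *\<^sub>R (a + b) \<in> K"
    using convexD[OF \<open>convex K\<close> a(1) b(1), of "1/2" "1/2"] by (simp add: scaleR_add_right)
  moreover have "qp_cost H F x a \<le> qp_cost H F x b" "qp_cost H F x b \<le> qp_cost H F x a"
    using a b by simp_all
  ultimately have "qp_cost H F x ((1/2) *\<^sub>R (a + b)) < qp_cost H F x a"
    unfolding qp_cost_midpoint by (simp add: field_simps)
  then show False
    using a(2) \<open>(1/2) *\<^sub>R (a + b) \<in> K\<close> by fastforce
qed

lemma zstar_feasible:
  fixes H :: "real^'z^'z"
  assumes pd: "\<forall>z. z \<noteq> 0 \<longrightarrow> z \<bullet> (H *v z) > 0"
    and feasible: "(\<Inter>j\<in>I. Zj G S w j x) \<noteq> {}"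
  shows "zstar H F G S w x I \<in> (\<Inter>j\<in>I. Zj G S w j x)"
proof -
  let ?K = "\<Inter>j\<in>I. Zj G S w j x"
  let ?is_min = "\<lambda>z. z \<in> ?K \<and> (\<forall>y\<in>?K. qp_cost H F x z \<le> qp_cost H F x y)"
  have "closed ?K"
    unfolding Zj_def by (intro closed_INT ballI closed_halfspace_le)
  have "convex ?K"
    unfolding Zj_def by (intro convex_INT ballI convex_halfspace_le)
  obtain z where "z \<in> ?K" "\<And>y. y \<in> ?K \<Longrightarrow> qp_cost H F x z \<le> qp_cost H F x y"
    using qp_cost_attains_inf[OF pd \<open>closed ?K\<close> feasible, where F = F and x = x] by blast
  then have "?is_min z"
    by blast
  moreover have "y = z" if "?is_min y" for y
    using that \<open>?is_min z\<close> by (auto intro: qp_cost_minimizer_unique[OF pd \<open>convex ?K\<close>])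
  ultimately have "?is_min (zstar H F G S w x I)"
    unfolding zstar_def by (rule theI)
  then show ?thesis
    by (rule conjunct1)
qed

lemma cball_subset_closedI:
  fixes v :: "'a::real_normed_vector"
  assumes "closed C" "0 < \<rho>" and smaller: "\<And>r. r < \<rho> \<Longrightarrow> cball v r \<subseteq> C"
  shows "cball v \<rho> \<subseteq> C"
proof -
  have "ball v \<rho> \<subseteq> C"
    using smaller[of "dist v _"] by (auto simp: subset_iff)
  then have "closure (ball v \<rho>) \<subseteq> C"
    using \<open>closed C\<close> by (rule closure_minimal)
  then show ?thesis
    using \<open>0 < \<rho>\<close> by simp
qed

lemma card_not_cball_subset_le_if_smaller:
  fixes C :: "'c::finite \<Rightarrow> 'a::real_normed_vector set"
  assumes closed: "\<And>j. closed (C j)" and center: "\<And>j. v \<in> C j"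
    and smaller: "\<And>r. r < \<rho> \<Longrightarrow> card {j. \<not> cball v r \<subseteq> C j} \<le> i"
  shows "card {j. \<not> cball v \<rho> \<subseteq> C j} \<le> i"
proof (cases "0 < \<rho>")
  case True
  define B where "B r = {j. \<not> cball v r \<subseteq> C j}" for r
  have "\<forall>\<^sub>F r in at_left \<rho>. j \<in> B r" if "j \<in> B \<rho>" for j
  proof -
    have "\<not> cball v \<rho> \<subseteq> C j"
      using that unfolding B_def by simp
    then obtain r0 where "r0 < \<rho>" "\<not> cball v r0 \<subseteq> C j"
      using cball_subset_closedI[OF closed True] by metis
    have "j \<in> B r" if "r0 \<le> r" for r
      using subset_cball[OF that, of v] \<open>\<not> cball v r0 \<subseteq> C j\<close> unfolding B_def by blast
    with eventually_at_left_real[OF \<open>r0 < \<rho>\<close>] show ?thesis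
      by (rule eventually_mono) simp
  qed
  then have "\<forall>\<^sub>F r in at_left \<rho>. \<forall>j\<in>B \<rho>. j \<in> B r"
    by (intro eventually_ball_finite) auto
  moreover have "\<forall>\<^sub>F r in at_left \<rho>. r < \<rho>"
    using eventually_at_left_real[of "\<rho> - 1" \<rho>] by (rule eventually_mono) auto
  ultimately have "\<forall>\<^sub>F r in at_left \<rho>. B \<rho> \<subseteq> B r \<and> r < \<rho>"
    by eventually_elim blast
  then obtain r where "B \<rho> \<subseteq> B r" "r < \<rho>"
    using eventually_happens'[OF trivial_limit_at_left_real] by blast
  then show ?thesis
    using smaller[of r] card_mono[of "B r" "B \<rho>"] unfolding B_def by simp
next
  case False
  then have "cball v \<rho> \<subseteq> C j" for j
    using center[of j] by (cases "\<rho> = 0") auto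
  then show ?thesis
    by simp
qed

lemma Pair_mem_cball:
  assumes "dist a a' \<le> r" "dist b b' \<le> s"
  shows "(a', b') \<in> cball (a, b) (sqrt (r\<^sup>2 + s\<^sup>2))"
proof -
  have "(dist a a')\<^sup>2 + (dist b b')\<^sup>2 \<le> r\<^sup>2 + s\<^sup>2"
    using assms by (intro add_mono power_mono) auto
  then show ?thesis
    by (simp add: dist_Pair_Pair real_sqrt_le_mono)
qed

lemma Pair_mem_Vj_iff: "(x, z) \<in> Vj G S w j \<longleftrightarrow> z \<in> Zj G S w j x"
  unfolding Vj_def Zj_def by auto

lemma closed_Vj: "closed (Vj G S w j)"
proof -
  have "Vj G S w j = {v. (- (S $ j), G $ j) \<bullet> v \<le> w $ j}"
    unfolding Vj_def by auto
  then show ?thesis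
    by (simp add: closed_halfspace_le)
qed

lemma not_cball_subset_Vj_if_not_cball_subset_Zj:
  assumes "\<not> cball z (\<kappa> * norm (x - xhat)) \<subseteq> Zj G S w j x"
  shows "\<not> cball (xhat, z) (sqrt (1 + \<kappa>\<^sup>2) * norm (x - xhat)) \<subseteq> Vj G S w j"
proof -
  let ?d = "norm (x - xhat)"
  obtain z' where z': "dist z z' \<le> \<kappa> * ?d" "z' \<notin> Zj G S w j x"
    using assms by (auto simp: subset_iff)
  have "?d\<^sup>2 + (\<kappa> * ?d)\<^sup>2 = (1 + \<kappa>\<^sup>2) * ?d\<^sup>2"
    by (simp add: power_mult_distrib algebra_simps)
  then have "sqrt (?d\<^sup>2 + (\<kappa> * ?d)\<^sup>2) = sqrt (1 + \<kappa>\<^sup>2) * ?d"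
    by (simp add: real_sqrt_mult)
  then have "(x, z') \<in> cball (xhat, z) (sqrt (1 + \<kappa>\<^sup>2) * ?d)"
    using Pair_mem_cball[OF _ z'(1), of xhat x ?d] by (simp add: dist_norm norm_minus_commute)
  then show ?thesis
    using z'(2) by (auto simp: Pair_mem_Vj_iff)
qed

lemma card_not_cball_subset_Vj_le_if_less_sigma:
  fixes G :: "real^'z^'c"
  assumes "v \<in> Vset G S w" "ereal r < sigma G S w i"
  shows "card {j. \<not> cball v r \<subseteq> Vj G S w j} \<le> i"
proof -
  obtain r' where "r < r'" and INF_ge: "ereal (real CARD('c) - real i) \<le>
      (INF u\<in>Vset G S w. ereal (real (card {j. cball u r' \<subseteq> Vj G S w j})))"
    using assms(2) unfolding sigma_def less_Sup_iff by auto
  let ?good = "\<lambda>r. {j. cball v r \<subseteq> Vj G S w j}"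
  have "real CARD('c) - real i \<le> real (card (?good r'))"
    using order_trans[OF INF_ge INF_lower[OF assms(1)]] by simp
  moreover have "card (?good r') \<le> card (?good r)"
    using subset_cball[of r r' v] \<open>r < r'\<close> by (intro card_mono) auto
  moreover have "card (?good r) + card {j. \<not> cball v r \<subseteq> Vj G S w j} = CARD('c)"
    by (subst card_Un_disjoint[symmetric]) (auto intro: arg_cong[where f = card])
  ultimately show ?thesis
    by linarith
qed

lemma card_not_cball_subset_Vj_le:
  fixes G :: "real^'z^'c"
  assumes "v \<in> Vset G S w" "ereal \<rho> \<le> sigma G S w i"
  shows "card {j. \<not> cball v \<rho> \<subseteq> Vj G S w j} \<le> i"
proof (rule card_not_cball_subset_le_if_smaller)
  show "v \<in> Vj G S w j" for j
    using assms(1) unfolding Vset_def by blast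
  show "card {j. \<not> cball v r \<subseteq> Vj G S w j} \<le> i" if "r < \<rho>" for r
  proof (rule card_not_cball_subset_Vj_le_if_less_sigma)
    have "ereal r < ereal \<rho>"
      using that by simp
    then show "ereal r < sigma G S w i"
      using assms(2) by (rule less_le_trans)
  qed (rule assms(1))
qed (rule closed_Vj)

theorem theorem3:
  fixes H :: "real^'z^'z" and F :: "real^'z^'x" and G :: "real^'z^'c"
    and S :: "real^'x^'c" and w :: "real^'c" and \<kappa> :: real
    and x xhat :: "real^'x" and i :: nat
  assumes H_sym: "transpose H = H"
    and H_pd: "\<forall>z. z \<noteq> 0 \<longrightarrow> z \<bullet> (H *v z) > 0"
    and feasible: "\<forall>x. (\<Inter>j. Zj G S w j x) \<noteq> {}"
    and LICQ: "\<forall>x. inj_on (\<lambda>j. G $ j) (active_set H F G S w x) \<and>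
                   independent ((\<lambda>j. G $ j) ` active_set H F G S w x)"
    and lip: "global_lipschitz H F G S w \<kappa>"
    and i_range: "i \<in> {1..CARD('c)}"
    and close: "ereal (norm (x - xhat)) \<le> sigma G S w i / ereal (sqrt (1 + \<kappa>\<^sup>2))"
  shows "card (active_set H F G S w xhat \<union>
           {j. j \<notin> active_set H F G S w xhat \<and>
               \<not> cball (zstar H F G S w xhat UNIV) (\<kappa> * norm (x - xhat)) \<subseteq> Zj G S w j x})
         \<le> CARD('z) + i"
proof -
  let ?A = "active_set H F G S w xhat" and ?zh = "zstar H F G S w xhat UNIV"
  let ?d = "norm (x - xhat)" and ?c = "sqrt (1 + \<kappa>\<^sup>2)"
  let ?bad = "{j. j \<notin> ?A \<and> \<not> cball ?zh (\<kappa> * ?d) \<subseteq> Zj G S w j x}"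
  have "card ?A \<le> CARD('z)"
    using LICQ independent_bound[of "(\<lambda>j. G $ j) ` ?A"] card_image[of "\<lambda>j. G $ j" ?A] by auto
  have center: "(xhat, ?zh) \<in> Vset G S w"
    using zstar_feasible[OF H_pd feasible[rule_format, of xhat]]
    unfolding Vset_def by (auto simp: Pair_mem_Vj_iff)
  have "ereal ?c * ereal ?d \<le> sigma G S w i"
    using close by (subst (asm) ereal_le_divide_pos) (auto simp: add_pos_nonneg)
  then have "card {j. \<not> cball (xhat, ?zh) (?c * ?d) \<subseteq> Vj G S w j} \<le> i"
    using card_not_cball_subset_Vj_le[OF center] by simp
  moreover have "?bad \<subseteq> {j. \<not> cball (xhat, ?zh) (?c * ?d) \<subseteq> Vj G S w j}"
    using not_cball_subset_Vj_if_not_cball_subset_Zj by blast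
  ultimately have "card ?bad \<le> i"
    by (meson card_mono finite order_trans)
  then show ?thesis
    using \<open>card ?A \<le> CARD('z)\<close> card_Un_le[of ?A ?bad] by linarith
qed

end
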